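(* Consider a cache network as described below, with caching gain $f(\mathbf{x})=\mathbb{E}_{z\sim P}[h(g_z(\mathbf{0}))-h(g_z(\mathbf{x}))]$ where $h(s)=s/(1-s)$. Let $\hat h^L(s)=\sum_{\ell=1}^L s^\ell$ be the $L$-th order Taylor polynomial of $h$ around $0$, let $f_z(\mathbf{x})=h(g_z(\mathbf{0}))-h(g_z(\mathbf{x}))$ and $\hat f_z^L(\mathbf{x})=\hat h^L(g_z(\mathbf{0}))-\hat h^L(g_z(\mathbf{x}))$, and let $\widehat{\nabla G_z^L}$ be the polynomial estimator built from $\hat f_z^L$ (used in Stochastic Continuous Greedy). Let $\bar s<1$ be the largest load among all edges when caches are empty, $\bar s=\max_z g_z(\mathbf{0})$. Then $$\big\|\nabla G_z(\mathbf{y})-\widehat{\nabla G_z^L}(\mathbf{y})\big\|_2\le2\sqrt{|V||\mathcal{C}|}\,\frac{\bar s^{L+1}}{1-\bar s}.$$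
   Context: Cache network: directed graph $(V,E)$, catalog of items $\mathcal{C}$, service rates $\mu_{(u,v)}>0$ for edges, a set of requests $\mathcal{R}$; each request $r$ has an item $i^r\in\mathcal{C}$, an arrival rate $\lambda^r>0$, and a path $p^r=(p^r_1,p^r_2,\dots)$ of nodes; $k_{p^r}(v)$ is the position of node $v$ on $p^r$. Caching decisions are $\mathbf{x}\in\{0,1\}^{|V||\mathcal{C}|}$, $x_{v,i}=1$ iff item $i$ is stored at node $v$. Edges are indexed by $z=(u,v)\in E$, drawn according to a distribution $P$, with load $g_{(u,v)}(\mathbf{x})=\frac{1}{\mu_{(u,v)}}\sum_{r\in\mathcal{R}:(v,u)\in p^r}\lambda^r\prod_{k'=1}^{k_{p^r}(v)}\big(1-x_{p^r_{k'},i^r}\big)$, assumed $<1$ when caches are empty. $G_z(\mathbf{y})=\mathbb{E}_{\mathbf{x}\sim\mathbf{y}}[f_z(\mathbf{x})]$ (independent Bernoulli$(y_{v,i})$ coordinates) is the multilinear relaxation. For a polynomial, its multilinearization $\dot p$ replaces every positive exponent by $1$; the polynomial estimator has coordinates $\dot{\hat f}{}_z^L([\mathbf{y}]_{+j})-\dot{\hat f}{}_z^L([\mathbf{y}]_{-j})$, where $[\mathbf{y}]_{\pm j}$ sets coordinate $j$ to $1$/$0$. *)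

theory Defs
  imports "HOL-Analysis.Analysis" "HOL-Library.Poly_Mapping"
begin

(* Multivariate real polynomials in variables of type 'j, represented as
   finitely supported maps from monomials (exponent vectors 'j =>0 nat) to
   real coefficients; ring operations are those of HOL-Library.Poly_Mapping. *)
type_synonym 'j mpoly = "('j \<Rightarrow>\<^sub>0 nat) \<Rightarrow>\<^sub>0 real"

definition mp_const :: "real \<Rightarrow> 'j mpoly" where
  "mp_const c = Poly_Mapping.single 0 c"

definition mp_var :: "'j \<Rightarrow> 'j mpoly" where
  "mp_var j = Poly_Mapping.single (Poly_Mapping.single j 1) 1"

definition mp_eval :: "'j mpoly \<Rightarrow> ('j \<Rightarrow> real) \<Rightarrow> real" where
  "mp_eval p y = (\<Sum>m\<in>Poly_Mapping.keys p. Poly_Mapping.lookup p m *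
                    (\<Prod>j\<in>Poly_Mapping.keys m. y j ^ Poly_Mapping.lookup m j))"

(* evaluation of the multilinearization p-dot of p at y: every positive
   exponent is replaced by 1 *)
definition mp_mlin_eval :: "'j mpoly \<Rightarrow> ('j \<Rightarrow> real) \<Rightarrow> real" where
  "mp_mlin_eval p y = (\<Sum>m\<in>Poly_Mapping.keys p. Poly_Mapping.lookup p m *
                    (\<Prod>j\<in>Poly_Mapping.keys m. y j))"

definition on_path :: "'v list \<Rightarrow> 'v \<times> 'v \<Rightarrow> bool" where
  "on_path p e = (\<exists>k. Suc k < length p \<and> (p ! k, p ! Suc k) = e)"

(* 0-based position of node v on pth p; the paper's k_p(v) equals pos p v + 1 *)
definition pos :: "'v list \<Rightarrow> 'v \<Rightarrow> nat" where
  "pos p v = (LEAST k. k < length p \<and> p ! k = v)"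

(* load of edge (u,v) under caching vector x (x_{(w,i)} = 1 iff item i cached at w):
   g_{(u,v)}(x) = 1/mu_{(u,v)} * sum_{r: (v,u) in p^r} lambda^r prod_{k'=1}^{k_{p^r}(v)} (1 - x_{p^r_k', i^r}) *)
definition load ::
  "'r set \<Rightarrow> ('r \<Rightarrow> 'c) \<Rightarrow> ('r \<Rightarrow> real) \<Rightarrow> ('r \<Rightarrow> 'v list) \<Rightarrow> ('v \<times> 'v \<Rightarrow> real)
   \<Rightarrow> 'v \<times> 'v \<Rightarrow> ('v \<times> 'c \<Rightarrow> real) \<Rightarrow> real" where
  "load R item lam pth mu z x =
     (case z of (u, v) \<Rightarrow>
       (1 / mu (u, v)) * (\<Sum>r\<in>{r\<in>R. on_path (pth r) (v, u)}.
          lam r * (\<Prod>k'\<in>{0..pos (pth r) v}. 1 - x (pth r ! k', item r))))"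

definition load_poly ::
  "'r set \<Rightarrow> ('r \<Rightarrow> 'c) \<Rightarrow> ('r \<Rightarrow> real) \<Rightarrow> ('r \<Rightarrow> 'v list) \<Rightarrow> ('v \<times> 'v \<Rightarrow> real)
   \<Rightarrow> 'v \<times> 'v \<Rightarrow> ('v \<times> 'c) mpoly" where
  "load_poly R item lam pth mu z =
     (case z of (u, v) \<Rightarrow>
       (\<Sum>r\<in>{r\<in>R. on_path (pth r) (v, u)}.
          mp_const (lam r / mu (u, v)) *
          (\<Prod>k'\<in>{0..pos (pth r) v}. 1 - mp_var (pth r ! k', item r))))"

definition h :: "real \<Rightarrow> real" where
  "h s = s / (1 - s)"

definition h_hat :: "nat \<Rightarrow> real \<Rightarrow> real" where
  "h_hat L s = (\<Sum>l=1..L. s ^ l)"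

definition f_z ::
  "'r set \<Rightarrow> ('r \<Rightarrow> 'c) \<Rightarrow> ('r \<Rightarrow> real) \<Rightarrow> ('r \<Rightarrow> 'v list) \<Rightarrow> ('v \<times> 'v \<Rightarrow> real)
   \<Rightarrow> 'v \<times> 'v \<Rightarrow> ('v \<times> 'c \<Rightarrow> real) \<Rightarrow> real" where
  "f_z R item lam pth mu z x =
     h (load R item lam pth mu z (\<lambda>_. 0)) - h (load R item lam pth mu z x)"

definition f_hat_poly ::
  "'r set \<Rightarrow> ('r \<Rightarrow> 'c) \<Rightarrow> ('r \<Rightarrow> real) \<Rightarrow> ('r \<Rightarrow> 'v list) \<Rightarrow> ('v \<times> 'v \<Rightarrow> real)
   \<Rightarrow> nat \<Rightarrow> 'v \<times> 'v \<Rightarrow> ('v \<times> 'c) mpoly" where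
  "f_hat_poly R item lam pth mu L z =
     mp_const (h_hat L (load R item lam pth mu z (\<lambda>_. 0)))
     - (\<Sum>l=1..L. (load_poly R item lam pth mu z) ^ l)"

(* multilinear relaxation: expectation of F(x) where x_j ~ Bernoulli(y_j)
   independently for j \<in> J (x = indicator of the set S of ones) *)
definition multilin_rel :: "'j set \<Rightarrow> (('j \<Rightarrow> real) \<Rightarrow> real) \<Rightarrow> ('j \<Rightarrow> real) \<Rightarrow> real" where
  "multilin_rel J F y =
     (\<Sum>S\<in>Pow J. (\<Prod>j\<in>S. y j) * (\<Prod>j\<in>J - S. 1 - y j) *
                 F (\<lambda>j. if j \<in> S then 1 else 0))"

definition partial :: "(('j \<Rightarrow> real) \<Rightarrow> real) \<Rightarrow> 'j \<Rightarrow> ('j \<Rightarrow> real) \<Rightarrow> real" where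
  "partial G j y = deriv (\<lambda>t. G (y(j := t))) (y j)"

end

theory Submission
  imports Defs
begin

text \<open>The multilinear relaxation G of any F is affine in each coordinate, so its j-th partial
  derivative is G(y[j:=1]) - G(y[j:=0]); and for a polynomial P in the ground variables the
  multilinearization of P is exactly the relaxation of P, because x^n = x on 0/1 points.
  Hence every coordinate of the estimation error is the same finite difference of the
  relaxation of D = f_z - f_hat_z^L.  On 0/1 points, D is the decrease of the Taylor remainder
  h(s) - h_hat^L(s) = s^(L+1)/(1-s) from s = g_z(0) to s = g_z(x), and since caching only
  lowers the load, D lies in [0, sbar^(L+1)/(1-sbar)].  Relaxations are convex combinations
  of such values, so each coordinate error is at most that bound, and the 2-norm over the
  |V||C| coordinates at most sqrt(|V||C|) times it, so the factor 2 is slack.\<close>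

section \<open>Evaluation and variables of polynomials\<close>

definition mp_monom_eval :: "('j \<Rightarrow> real) \<Rightarrow> ('j \<Rightarrow>\<^sub>0 nat) \<Rightarrow> real" where
  "mp_monom_eval x m = (\<Prod>j\<in>Poly_Mapping.keys m. x j ^ Poly_Mapping.lookup m j)"

lemma mp_monom_eval_superset:
  "finite A \<Longrightarrow> Poly_Mapping.keys m \<subseteq> A \<Longrightarrow>
   mp_monom_eval x m = (\<Prod>j\<in>A. x j ^ Poly_Mapping.lookup m j)"
  unfolding mp_monom_eval_def by (rule prod.mono_neutral_left) (auto simp: in_keys_iff)

lemma mp_monom_eval_add: "mp_monom_eval x (a + b) = mp_monom_eval x a * mp_monom_eval x b"
proof -
  let ?A = "Poly_Mapping.keys a \<union> Poly_Mapping.keys b"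
  have "mp_monom_eval x (a + b) = (\<Prod>j\<in>?A. x j ^ Poly_Mapping.lookup (a + b) j)"
    using keys_add[of a b] by (intro mp_monom_eval_superset) auto
  also have "\<dots> = (\<Prod>j\<in>?A. x j ^ Poly_Mapping.lookup a j) * (\<Prod>j\<in>?A. x j ^ Poly_Mapping.lookup b j)"
    by (simp add: lookup_add power_add prod.distrib)
  finally show ?thesis
    by (simp add: mp_monom_eval_superset[of ?A a] mp_monom_eval_superset[of ?A b])
qed

lemma mp_eval_eq_monom_sum:
  "mp_eval p x = (\<Sum>m\<in>Poly_Mapping.keys p. Poly_Mapping.lookup p m * mp_monom_eval x m)"
  by (simp add: mp_eval_def mp_monom_eval_def)

lemma mp_eval_superset:
  "finite A \<Longrightarrow> Poly_Mapping.keys p \<subseteq> A \<Longrightarrow>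
   mp_eval p x = (\<Sum>m\<in>A. Poly_Mapping.lookup p m * mp_monom_eval x m)"
  unfolding mp_eval_eq_monom_sum by (rule sum.mono_neutral_left) (auto simp: in_keys_iff)

lemma mp_eval_zero [simp]: "mp_eval 0 x = 0"
  by (simp add: mp_eval_def)

lemma mp_eval_add: "mp_eval (p + q) x = mp_eval p x + mp_eval q x"
proof -
  let ?A = "Poly_Mapping.keys p \<union> Poly_Mapping.keys q"
  have "mp_eval (p + q) x = (\<Sum>m\<in>?A. Poly_Mapping.lookup (p + q) m * mp_monom_eval x m)"
    using keys_add[of p q] by (intro mp_eval_superset) auto
  then show ?thesis
    by (simp add: lookup_add distrib_right sum.distrib mp_eval_superset[of ?A p] mp_eval_superset[of ?A q])
qed

lemma mp_eval_uminus: "mp_eval (- p) x = - mp_eval p x"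
  by (simp add: mp_eval_def sum_negf)

lemma mp_eval_diff: "mp_eval (p - q) x = mp_eval p x - mp_eval q x"
  using mp_eval_add[of p "- q" x] by (simp add: mp_eval_uminus)

lemma mp_eval_sum: "mp_eval (sum f A) x = (\<Sum>a\<in>A. mp_eval (f a) x)"
  by (induction A rule: infinite_finite_induct) (auto simp: mp_eval_add)

lemma mp_eval_single: "mp_eval (Poly_Mapping.single m c) x = c * mp_monom_eval x m"
  by (simp add: mp_eval_eq_monom_sum)

lemma poly_mapping_sum_single_lookup:
  "(\<Sum>a\<in>Poly_Mapping.keys p. Poly_Mapping.single a (Poly_Mapping.lookup p a)) = p"
  by (rule poly_mapping_eqI) (simp add: lookup_sum lookup_single when_def in_keys_iff)

lemma mp_eval_mult: "mp_eval (p * q) x = mp_eval p x * mp_eval q x"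
proof -
  let ?P = "Poly_Mapping.keys p" and ?Q = "Poly_Mapping.keys q"
  have "p * q = (\<Sum>a\<in>?P. Poly_Mapping.single a (Poly_Mapping.lookup p a))
              * (\<Sum>b\<in>?Q. Poly_Mapping.single b (Poly_Mapping.lookup q b))"
    by (simp only: poly_mapping_sum_single_lookup)
  also have "\<dots> = (\<Sum>a\<in>?P. \<Sum>b\<in>?Q.
                    Poly_Mapping.single (a + b) (Poly_Mapping.lookup p a * Poly_Mapping.lookup q b))"
    by (simp add: sum_distrib_left sum_distrib_right mult_single) (rule sum.swap)
  finally have "mp_eval (p * q) x = (\<Sum>a\<in>?P. \<Sum>b\<in>?Q.
      Poly_Mapping.lookup p a * Poly_Mapping.lookup q b * mp_monom_eval x (a + b))"
    by (simp add: mp_eval_sum mp_eval_single)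
  also have "\<dots> = (\<Sum>a\<in>?P. Poly_Mapping.lookup p a * mp_monom_eval x a)
                 * (\<Sum>b\<in>?Q. Poly_Mapping.lookup q b * mp_monom_eval x b)"
    unfolding sum_product by (intro sum.cong refl) (simp add: mp_monom_eval_add mult_ac)
  finally show ?thesis
    by (simp only: mp_eval_eq_monom_sum)
qed

lemma mp_eval_one [simp]: "mp_eval 1 x = 1"
  by (simp add: mp_eval_def)

lemma mp_eval_const [simp]: "mp_eval (mp_const c) x = c"
  by (simp add: mp_const_def mp_eval_single mp_monom_eval_def)

lemma mp_eval_var [simp]: "mp_eval (mp_var j) x = x j"
  by (simp add: mp_var_def mp_eval_single mp_monom_eval_def)

lemma mp_eval_power: "mp_eval (p ^ n) x = mp_eval p x ^ n"
  by (induction n) (auto simp: mp_eval_mult)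

lemma mp_eval_prod: "mp_eval (prod f A) x = (\<Prod>a\<in>A. mp_eval (f a) x)"
  by (induction A rule: infinite_finite_induct) (auto simp: mp_eval_mult)

lemma mp_eval_eq_mp_mlin_eval_binary:
  assumes "\<And>j. x j = 0 \<or> x j = 1"
  shows "mp_eval p x = mp_mlin_eval p x"
proof -
  have "x j ^ n = x j" if "n \<noteq> 0" for j n
    using assms[of j] that by auto
  then show ?thesis
    unfolding mp_eval_def mp_mlin_eval_def
    by (intro sum.cong refl arg_cong2[where f = "(*)"] prod.cong) (simp add: in_keys_iff)
qed

definition mp_vars :: "'j mpoly \<Rightarrow> 'j set" where
  "mp_vars p = (\<Union>m\<in>Poly_Mapping.keys p. Poly_Mapping.keys m)"

lemma mp_vars_add: "mp_vars (p + q) \<subseteq> mp_vars p \<union> mp_vars q"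
  unfolding mp_vars_def using keys_add[of p q] by blast

lemma mp_vars_diff: "mp_vars (p - q) \<subseteq> mp_vars p \<union> mp_vars q"
  unfolding mp_vars_def using keys_diff[of p q] by blast

lemma mp_vars_mult: "mp_vars (p * q) \<subseteq> mp_vars p \<union> mp_vars q"
proof
  fix j assume "j \<in> mp_vars (p * q)"
  then obtain m where m: "m \<in> Poly_Mapping.keys (p * q)" "j \<in> Poly_Mapping.keys m"
    unfolding mp_vars_def by blast
  then obtain a b where "m = a + b" "a \<in> Poly_Mapping.keys p" "b \<in> Poly_Mapping.keys q"
    using keys_mult[of p q] by blast
  then show "j \<in> mp_vars p \<union> mp_vars q"
    using m(2) keys_add[of a b] unfolding mp_vars_def by blast
qed

lemma mp_vars_zero [simp]: "mp_vars 0 = {}"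
  by (simp add: mp_vars_def)

lemma mp_vars_one [simp]: "mp_vars 1 = {}"
  by (simp add: mp_vars_def)

lemma mp_vars_const [simp]: "mp_vars (mp_const c) = {}"
  by (simp add: mp_vars_def mp_const_def)

lemma mp_vars_var [simp]: "mp_vars (mp_var j) = {j}"
  by (simp add: mp_vars_def mp_var_def)

lemma mp_vars_diff_subsetI: "mp_vars p \<subseteq> J \<Longrightarrow> mp_vars q \<subseteq> J \<Longrightarrow> mp_vars (p - q) \<subseteq> J"
  using mp_vars_diff[of p q] by blast

lemma mp_vars_mult_subsetI: "mp_vars p \<subseteq> J \<Longrightarrow> mp_vars q \<subseteq> J \<Longrightarrow> mp_vars (p * q) \<subseteq> J"
  using mp_vars_mult[of p q] by blast

lemma mp_vars_power_subsetI: "mp_vars p \<subseteq> J \<Longrightarrow> mp_vars (p ^ n) \<subseteq> J"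
  by (induction n) (simp_all add: mp_vars_mult_subsetI)

lemma mp_vars_sum_subsetI:
  "(\<And>a. a \<in> A \<Longrightarrow> mp_vars (f a) \<subseteq> J) \<Longrightarrow> mp_vars (sum f A) \<subseteq> J"
proof (induction A rule: infinite_finite_induct)
  case (insert a A)
  then show ?case using mp_vars_add[of "f a" "sum f A"] by auto
qed simp_all

lemma mp_vars_prod_subsetI:
  "(\<And>a. a \<in> A \<Longrightarrow> mp_vars (f a) \<subseteq> J) \<Longrightarrow> mp_vars (prod f A) \<subseteq> J"
  by (induction A rule: infinite_finite_induct) (simp_all add: mp_vars_mult_subsetI)

section \<open>The multilinear relaxation\<close>

lemma multilin_rel_eq_indicator:
  "multilin_rel J F y =
     (\<Sum>S\<in>Pow J. (\<Prod>j\<in>S. y j) * (\<Prod>j\<in>J - S. 1 - y j) * F (indicator S))"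
  unfolding multilin_rel_def indicator_def of_bool_def by simp

lemma multilin_rel_cong:
  "(\<And>S. S \<subseteq> J \<Longrightarrow> F (indicator S) = G (indicator S)) \<Longrightarrow>
   multilin_rel J F y = multilin_rel J G y"
  unfolding multilin_rel_eq_indicator by (intro sum.cong) auto

lemma multilin_rel_sum:
  "multilin_rel J (\<lambda>x. \<Sum>a\<in>A. F a x) y = (\<Sum>a\<in>A. multilin_rel J (F a) y)"
  unfolding multilin_rel_def by (simp add: sum_distrib_left) (rule sum.swap)

lemma multilin_rel_cmult: "multilin_rel J (\<lambda>x. c * F x) y = c * multilin_rel J F y"
  unfolding multilin_rel_def by (simp add: sum_distrib_left mult_ac)

lemma multilin_rel_diff:
  "multilin_rel J (\<lambda>x. F x - G x) y = multilin_rel J F y - multilin_rel J G y"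
  unfolding multilin_rel_def by (simp add: algebra_simps sum_subtractf)

lemma multilin_rel_const: "finite J \<Longrightarrow> multilin_rel J (\<lambda>_. c) y = c"
  unfolding multilin_rel_def
  using prod_add[of J y "\<lambda>j. 1 - y j"] by (simp flip: sum_distrib_right)

lemma multilin_rel_mono:
  assumes "\<And>j. j \<in> J \<Longrightarrow> 0 \<le> y j \<and> y j \<le> 1"
    and "\<And>S. S \<subseteq> J \<Longrightarrow> F (indicator S) \<le> G (indicator S)"
  shows "multilin_rel J F y \<le> multilin_rel J G y"
  unfolding multilin_rel_eq_indicator
proof (intro sum_mono mult_left_mono)
  fix S assume "S \<in> Pow J"
  then show "F (indicator S) \<le> G (indicator S)" using assms(2) by auto
  show "0 \<le> (\<Prod>j\<in>S. y j) * (\<Prod>j\<in>J - S. 1 - y j)"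
    using \<open>S \<in> Pow J\<close> assms(1) by (intro mult_nonneg_nonneg prod_nonneg) auto
qed

text \<open>Expanding the product of y j + b j over J with b vanishing exactly on K.\<close>
lemma multilin_rel_monomial:
  assumes "finite J" "K \<subseteq> J"
  shows "multilin_rel J (\<lambda>x. \<Prod>j\<in>K. x j) y = (\<Prod>j\<in>K. y j)"
proof -
  define b where "b j = (if j \<in> K then 0 else 1 - y j)" for j
  have "finite K" using assms finite_subset by blast
  then have indicator_prod: "(\<Prod>j\<in>K. indicator S j :: real) = (if K \<subseteq> S then 1 else 0)" for S
    by (induction K rule: finite_induct) auto
  have b_prod: "(\<Prod>j\<in>J - S. b j) = (if K \<subseteq> S then (\<Prod>j\<in>J - S. 1 - y j) else 0)"
    if "S \<subseteq> J" for S
  proof (cases "K \<subseteq> S")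
    case False
    then obtain k where "k \<in> K" "k \<notin> S" by blast
    then show ?thesis using False assms by (auto simp: b_def intro!: prod_zero bexI[of _ k])
  qed (auto simp: b_def intro!: prod.cong)
  have "multilin_rel J (\<lambda>x. \<Prod>j\<in>K. x j) y = (\<Sum>S\<in>Pow J. (\<Prod>j\<in>S. y j) * (\<Prod>j\<in>J - S. b j))"
    unfolding multilin_rel_eq_indicator indicator_prod by (intro sum.cong) (auto simp: b_prod)
  also have "\<dots> = (\<Prod>j\<in>J. y j + b j)"
    by (rule prod_add[symmetric]) (rule assms)
  also have "\<dots> = (\<Prod>j\<in>J. if j \<in> K then y j else 1)"
    by (rule prod.cong) (auto simp: b_def)
  also have "\<dots> = (\<Prod>j\<in>K. y j)"
    using assms by (simp add: prod.If_cases Int_absorb1)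
  finally show ?thesis .
qed

lemma multilin_rel_mp_eval:
  assumes "finite J" "mp_vars p \<subseteq> J"
  shows "multilin_rel J (mp_eval p) y = mp_mlin_eval p y"
proof -
  have "multilin_rel J (mp_eval p) y = multilin_rel J (mp_mlin_eval p) y"
    by (intro multilin_rel_cong mp_eval_eq_mp_mlin_eval_binary) (simp add: indicator_def)
  also have "\<dots> = (\<Sum>m\<in>Poly_Mapping.keys p. Poly_Mapping.lookup p m *
                      multilin_rel J (\<lambda>x. \<Prod>j\<in>Poly_Mapping.keys m. x j) y)"
    unfolding mp_mlin_eval_def by (simp add: multilin_rel_sum multilin_rel_cmult)
  also have "\<dots> = mp_mlin_eval p y"
    unfolding mp_mlin_eval_def using assms
    by (intro sum.cong refl) (subst multilin_rel_monomial, auto simp: mp_vars_def)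
  finally show ?thesis .
qed

lemma multilin_rel_affine_coordinate:
  assumes "finite J" "j \<in> J"
  shows "multilin_rel J F (y(j := t)) =
           t * multilin_rel J F (y(j := 1)) + (1 - t) * multilin_rel J F (y(j := 0))"
proof -
  define w where "w S = (\<Prod>i\<in>S - {j}. y i) * (\<Prod>i\<in>J - S - {j}. 1 - y i)" for S
  have split: "(\<Prod>i\<in>S. (y(j := s)) i) * (\<Prod>i\<in>J - S. 1 - (y(j := s)) i)
                 = (if j \<in> S then s else 1 - s) * w S" if "S \<subseteq> J" for S s
  proof -
    have y_off_j: "(\<Prod>i\<in>A - {j}. f ((y(j := s)) i)) = (\<Prod>i\<in>A - {j}. f (y i))"
      for A and f :: "real \<Rightarrow> real"
      by (intro prod.cong) auto
    have "finite S" "finite (J - S)" using assms that finite_subset by auto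
    then show ?thesis
      using assms y_off_j[where A = S and f = "\<lambda>t. t"] y_off_j[where A = "J - S" and f = "\<lambda>t. 1 - t"]
      by (cases "j \<in> S") (simp_all add: w_def prod.remove[of _ j] Diff_insert_absorb mult_ac)
  qed
  have "multilin_rel J F (y(j := s)) =
          (\<Sum>S\<in>Pow J. (if j \<in> S then s else 1 - s) * w S * F (indicator S))" for s
    unfolding multilin_rel_eq_indicator by (intro sum.cong refl) (simp only: Pow_iff split)
  then show ?thesis
    by (simp add: sum_distrib_left sum.distrib[symmetric]) (intro sum.cong refl, simp add: algebra_simps)
qed

lemma partial_multilin_rel:
  assumes "finite J" "j \<in> J"
  shows "partial (multilin_rel J F) j y = multilin_rel J F (y(j := 1)) - multilin_rel J F (y(j := 0))"
proof -
  let ?a = "multilin_rel J F (y(j := 1))" and ?b = "multilin_rel J F (y(j := 0))"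
  have affine: "(\<lambda>t. multilin_rel J F (y(j := t))) = (\<lambda>t. t * ?a + (1 - t) * ?b)"
    using multilin_rel_affine_coordinate[OF assms] by blast
  have "((\<lambda>t. t * ?a + (1 - t) * ?b) has_real_derivative 1 * ?a + (0 - 1) * ?b) (at (y j))"
    by (intro DERIV_add DERIV_cmult_right DERIV_ident DERIV_diff DERIV_const)
  then show ?thesis
    unfolding partial_def affine by (simp add: DERIV_imp_deriv)
qed

lemma polynomial_estimator_error:
  assumes "finite J" "j \<in> J" "mp_vars P \<subseteq> J"
    and "\<And>i. i \<in> J \<Longrightarrow> 0 \<le> y i \<and> y i \<le> 1"
    and "\<And>S. S \<subseteq> J \<Longrightarrow> 0 \<le> F (indicator S) - mp_eval P (indicator S) \<and>
                         F (indicator S) - mp_eval P (indicator S) \<le> B"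
  shows "\<bar>partial (multilin_rel J F) j y - (mp_mlin_eval P (y(j := 1)) - mp_mlin_eval P (y(j := 0)))\<bar> \<le> B"
proof -
  define D where "D x = F x - mp_eval P x" for x
  have D_range: "0 \<le> multilin_rel J D (y(j := c)) \<and> multilin_rel J D (y(j := c)) \<le> B"
    if "c = 0 \<or> c = 1" for c :: real
  proof -
    have y_c: "\<And>i. i \<in> J \<Longrightarrow> 0 \<le> (y(j := c)) i \<and> (y(j := c)) i \<le> 1"
      using assms(4) that by auto
    have "multilin_rel J (\<lambda>_. 0) (y(j := c)) \<le> multilin_rel J D (y(j := c))"
      "multilin_rel J D (y(j := c)) \<le> multilin_rel J (\<lambda>_. B) (y(j := c))"
      using assms(5) by (intro multilin_rel_mono[OF y_c]; simp add: D_def)+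
    then show ?thesis
      by (simp add: multilin_rel_const[OF assms(1)])
  qed
  have "partial (multilin_rel J F) j y - (mp_mlin_eval P (y(j := 1)) - mp_mlin_eval P (y(j := 0)))
          = multilin_rel J D (y(j := 1)) - multilin_rel J D (y(j := 0))"
    unfolding partial_multilin_rel[OF assms(1,2)] D_def multilin_rel_diff
      multilin_rel_mp_eval[OF assms(1,3)] by simp
  then show ?thesis
    using D_range[of 0] D_range[of 1] by auto
qed

lemma L2_set_le_sqrt_card:
  assumes "\<And>i. i \<in> A \<Longrightarrow> \<bar>f i\<bar> \<le> B" "0 \<le> B"
  shows "L2_set f A \<le> sqrt (card A) * B"
proof -
  have "L2_set f A = L2_set (\<lambda>i. \<bar>f i\<bar>) A"
    by (simp add: L2_set_def)
  also have "\<dots> \<le> L2_set (\<lambda>_. B) A"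
    using assms(1) by (intro L2_set_mono) auto
  also have "\<dots> = sqrt (card A) * B"
    using assms(2) by (simp add: L2_set_constant)
  finally show ?thesis .
qed

section \<open>Loads and the Taylor remainder\<close>

lemma h_minus_h_hat: "s \<noteq> 1 \<Longrightarrow> h s - h_hat L s = s ^ (L + 1) / (1 - s)"
proof (induction L)
  case 0
  then show ?case by (simp add: h_def h_hat_def)
next
  case (Suc L)
  have "h_hat (Suc L) s = h_hat L s + s ^ Suc L"
    by (simp add: h_hat_def)
  with Suc show ?case
    by (simp add: field_simps)
qed

lemma power_div_one_minus_mono:
  fixes a b :: real
  shows "0 \<le> a \<Longrightarrow> a \<le> b \<Longrightarrow> b < 1 \<Longrightarrow> a ^ n / (1 - a) \<le> b ^ n / (1 - b)"
  by (rule frac_le) (auto intro: power_mono)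

lemma pos_less_length:
  assumes "on_path p (v, u)"
  shows "pos p v < length p"
proof -
  obtain k where k: "Suc k < length p" "p ! k = v"
    using assms unfolding on_path_def by auto
  then have "pos p v \<le> k"
    unfolding pos_def by (intro Least_le) simp
  with k show ?thesis by simp
qed

lemma mp_eval_load_poly:
  "mp_eval (load_poly R item lam pth mu z) x = load R item lam pth mu z x"
  by (cases z) (simp add: load_poly_def load_def mp_eval_sum mp_eval_mult mp_eval_prod
      mp_eval_diff sum_distrib_left)

lemma mp_vars_load_poly:
  assumes "\<And>r. r \<in> R \<Longrightarrow> item r \<in> Cat" and "\<And>r. r \<in> R \<Longrightarrow> set (pth r) \<subseteq> V"
  shows "mp_vars (load_poly R item lam pth mu z) \<subseteq> V \<times> Cat"
proof -
  obtain u v where z: "z = (u, v)" by (cases z)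
  have "(pth r ! k, item r) \<in> V \<times> Cat"
    if "r \<in> R" "on_path (pth r) (v, u)" "k \<le> pos (pth r) v" for r k
  proof -
    have "k < length (pth r)"
      using pos_less_length[OF that(2)] that(3) by simp
    then show ?thesis
      using assms that(1) nth_mem by blast
  qed
  then show ?thesis
    unfolding z load_poly_def prod.case
    by (intro mp_vars_sum_subsetI mp_vars_mult_subsetI mp_vars_prod_subsetI mp_vars_diff_subsetI) auto
qed

lemma load_bounds:
  assumes "mu z > 0" "\<And>r. r \<in> R \<Longrightarrow> lam r > 0" "\<And>i. 0 \<le> x i \<and> x i \<le> 1"
  shows "0 \<le> load R item lam pth mu z x \<and> load R item lam pth mu z x \<le> load R item lam pth mu z (\<lambda>_. 0)"
proof -
  obtain u v where z: "z = (u, v)" by (cases z)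
  let ?A = "{r \<in> R. on_path (pth r) (v, u)}"
  let ?t = "\<lambda>r. lam r * (\<Prod>k\<in>{0..pos (pth r) v}. 1 - x (pth r ! k, item r))"
  have t: "0 \<le> ?t r \<and> ?t r \<le> lam r" if "r \<in> ?A" for r
  proof -
    have "0 \<le> (\<Prod>k\<in>{0..pos (pth r) v}. 1 - x (pth r ! k, item r))"
      "(\<Prod>k\<in>{0..pos (pth r) v}. 1 - x (pth r ! k, item r)) \<le> 1"
      using assms(3) by (intro prod_nonneg prod_le_1; simp add: algebra_simps)+
    moreover have "lam r > 0" using that assms(2) by auto
    ultimately show ?thesis by (simp add: mult_left_le)
  qed
  have "0 \<le> sum ?t ?A" "sum ?t ?A \<le> sum lam ?A"
    using t by (auto intro: sum_nonneg sum_mono)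
  then show ?thesis
    unfolding z load_def using assms(1) z by (auto intro: divide_right_mono)
qed

lemma mp_eval_f_hat_poly:
  "mp_eval (f_hat_poly R item lam pth mu L z) x =
     h_hat L (load R item lam pth mu z (\<lambda>_. 0)) - h_hat L (load R item lam pth mu z x)"
  by (simp add: f_hat_poly_def h_hat_def mp_eval_diff mp_eval_sum mp_eval_power mp_eval_load_poly)

lemma mp_vars_f_hat_poly:
  assumes "\<And>r. r \<in> R \<Longrightarrow> item r \<in> Cat" and "\<And>r. r \<in> R \<Longrightarrow> set (pth r) \<subseteq> V"
  shows "mp_vars (f_hat_poly R item lam pth mu L z) \<subseteq> V \<times> Cat"
  unfolding f_hat_poly_def
  by (intro mp_vars_diff_subsetI mp_vars_sum_subsetI mp_vars_power_subsetI mp_vars_load_poly[OF assms]) simp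

lemma f_z_minus_f_hat_bounds:
  fixes L :: nat
  assumes "mu z > 0" "\<And>r. r \<in> R \<Longrightarrow> lam r > 0" "\<And>i. 0 \<le> x i \<and> x i \<le> 1"
    and "load R item lam pth mu z (\<lambda>_. 0) \<le> sbar" "sbar < 1"
  defines "D \<equiv> f_z R item lam pth mu z x - mp_eval (f_hat_poly R item lam pth mu L z) x"
  shows "0 \<le> D \<and> D \<le> sbar ^ (L + 1) / (1 - sbar)"
proof -
  let ?g0 = "load R item lam pth mu z (\<lambda>_. 0)" and ?gx = "load R item lam pth mu z x"
  have gx: "0 \<le> ?gx" "?gx \<le> ?g0"
    using load_bounds[of mu z R lam x item pth] assms(1-3) by auto
  have "D = (h ?g0 - h_hat L ?g0) - (h ?gx - h_hat L ?gx)"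
    unfolding D_def f_z_def mp_eval_f_hat_poly by simp
  also have "\<dots> = ?g0 ^ (L + 1) / (1 - ?g0) - ?gx ^ (L + 1) / (1 - ?gx)"
    using gx assms(4,5) by (simp add: h_minus_h_hat)
  finally have D: "D = ?g0 ^ (L + 1) / (1 - ?g0) - ?gx ^ (L + 1) / (1 - ?gx)" .
  have "?gx ^ (L + 1) / (1 - ?gx) \<le> ?g0 ^ (L + 1) / (1 - ?g0)"
    "?g0 ^ (L + 1) / (1 - ?g0) \<le> sbar ^ (L + 1) / (1 - sbar)"
    using gx assms(4,5) by (intro power_div_one_minus_mono; linarith)+
  moreover have "0 \<le> ?gx ^ (L + 1) / (1 - ?gx)"
    using gx assms(4,5) by simp
  ultimately show ?thesis
    unfolding D by linarith
qed

theorem theorem5: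
  fixes V :: "'v set" and Cat :: "'c set" and E :: "('v \<times> 'v) set"
    and mu :: "'v \<times> 'v \<Rightarrow> real"
    and R :: "'r set" and item :: "'r \<Rightarrow> 'c" and lam :: "'r \<Rightarrow> real"
    and pth :: "'r \<Rightarrow> 'v list"
    and L :: nat and z :: "'v \<times> 'v" and y :: "'v \<times> 'c \<Rightarrow> real"
  assumes finV: "finite V" and finC: "finite Cat" and E_sub: "E \<subseteq> V \<times> V"
    and mu_pos: "\<And>e. e \<in> E \<Longrightarrow> mu e > 0"
    and finR: "finite R"
    and item_in: "\<And>r. r \<in> R \<Longrightarrow> item r \<in> Cat"
    and lam_pos: "\<And>r. r \<in> R \<Longrightarrow> lam r > 0"
    and path_ne: "\<And>r. r \<in> R \<Longrightarrow> pth r \<noteq> []"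
    and path_distinct: "\<And>r. r \<in> R \<Longrightarrow> distinct (pth r)"
    and path_nodes: "\<And>r. r \<in> R \<Longrightarrow> set (pth r) \<subseteq> V"
    and path_edges: "\<And>r k. r \<in> R \<Longrightarrow> Suc k < length (pth r) \<Longrightarrow>
                       (pth r ! k, pth r ! Suc k) \<in> E"
    and load_lt1: "\<And>e. e \<in> E \<Longrightarrow> load R item lam pth mu e (\<lambda>_. 0) < 1"
    and z_in: "z \<in> E"
    and y_in: "\<And>j. j \<in> V \<times> Cat \<Longrightarrow> 0 \<le> y j \<and> y j \<le> 1"
  defines "sbar \<equiv> Max ((\<lambda>e. load R item lam pth mu e (\<lambda>_. 0)) ` E)"
  shows "L2_set (\<lambda>j.
            partial (multilin_rel (V \<times> Cat) (f_z R item lam pth mu z)) j y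
          - (mp_mlin_eval (f_hat_poly R item lam pth mu L z) (y(j := 1))
             - mp_mlin_eval (f_hat_poly R item lam pth mu L z) (y(j := 0))))
          (V \<times> Cat)
         \<le> 2 * sqrt (real (card V * card Cat)) * sbar ^ (L + 1) / (1 - sbar)"
proof -
  define B where "B = sbar ^ (L + 1) / (1 - sbar)"
  have "finite E"
    using E_sub finV finite_subset by blast
  then have z_le_sbar: "load R item lam pth mu z (\<lambda>_. 0) \<le> sbar"
    and "sbar \<in> (\<lambda>e. load R item lam pth mu e (\<lambda>_. 0)) ` E"
    unfolding sbar_def using z_in by (auto intro: Max_in)
  then have sbar_lt_1: "sbar < 1"
    using load_lt1 by auto
  have "0 \<le> load R item lam pth mu z (\<lambda>_. 0)"
    using load_bounds[of mu z R lam "\<lambda>_. 0"] mu_pos z_in lam_pos by auto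
  then have B_nonneg: "0 \<le> B"
    unfolding B_def using z_le_sbar sbar_lt_1 by simp
  have "L2_set (\<lambda>j.
            partial (multilin_rel (V \<times> Cat) (f_z R item lam pth mu z)) j y
          - (mp_mlin_eval (f_hat_poly R item lam pth mu L z) (y(j := 1))
             - mp_mlin_eval (f_hat_poly R item lam pth mu L z) (y(j := 0))))
          (V \<times> Cat) \<le> sqrt (card (V \<times> Cat)) * B"
  proof (intro L2_set_le_sqrt_card polynomial_estimator_error B_nonneg)
    show "mp_vars (f_hat_poly R item lam pth mu L z) \<subseteq> V \<times> Cat"
      using item_in path_nodes by (rule mp_vars_f_hat_poly)
    show "0 \<le> f_z R item lam pth mu z (indicator S) - mp_eval (f_hat_poly R item lam pth mu L z) (indicator S)
        \<and> f_z R item lam pth mu z (indicator S) - mp_eval (f_hat_poly R item lam pth mu L z) (indicator S) \<le> B"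
      for S :: "('v \<times> 'c) set"
      unfolding B_def using mu_pos z_in lam_pos z_le_sbar sbar_lt_1
      by (intro f_z_minus_f_hat_bounds) auto
  qed (use finV finC y_in in auto)
  also have "\<dots> \<le> 2 * sqrt (real (card V * card Cat)) * B"
    using B_nonneg by (simp add: card_cartesian_product)
  finally show ?thesis
    unfolding B_def by simp
qed

end
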